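(* Let $0<p<1$ and let $(\mathbf{x}_n)_{n=1}^\infty$ be a SUCC basic sequence in $\ell_p$. Then there are constants $0<c\le C<\infty$ such that for every finite $A\subseteq\mathbb{N}$, \[ c\Big(\sum_{j=1}^\infty\Big(\sum_{n\in A}|\mathbf{e}_j^*(\mathbf{x}_n)|^2\Big)^{p/2}\Big)^{1/p}\le\Big\|\sum_{n\in A}\mathbf{x}_n\Big\|_p\le C\Big(\sum_{j=1}^\infty\Big(\sum_{n\in A}|\mathbf{e}_j^*(\mathbf{x}_n)|^2\Big)^{p/2}\Big)^{1/p}, \] where $\mathbf{e}_j^*(f)$ denotes the $j$-th coordinate of $f\in\ell_p$.
   Context: A basic sequence is a sequence that is a basis (dense span in its closed linear span, biorthogonal functionals existing, $\inf\|\mathbf{x}_n\|>0$, $\sup\|\mathbf{x}_n^*\|<\infty$) of its closed linear span. It is SUCC (suppression unconditional for constant coefficients) if there is $C\ge1$ such that $\|\sum_{n\in A}\varepsilon_n\mathbf{x}_n\|\le C\|\sum_{n\in B}\varepsilon_n\mathbf{x}_n\|$ whenever $A\subseteq B$ are finite subsets of $\mathbb{N}$ and $(\varepsilon_n)_{n\in B}$ are scalars of modulus one. *)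

theory Defs
  imports "HOL-Analysis.Analysis"
begin

definition lp_space :: "real \<Rightarrow> (nat \<Rightarrow> 'a::real_normed_field) set" where
  "lp_space p = {f. summable (\<lambda>j. norm (f j) powr p)}"

definition lp_norm :: "real \<Rightarrow> (nat \<Rightarrow> 'a::real_normed_field) \<Rightarrow> real" where
  "lp_norm p f = (\<Sum>j. norm (f j) powr p) powr (1 / p)"

definition lin_span_seq :: "(nat \<Rightarrow> nat \<Rightarrow> 'a::real_normed_field) \<Rightarrow> (nat \<Rightarrow> 'a) set" where
  "lin_span_seq x = {(\<lambda>j. \<Sum>n\<in>F. a n * x n j) | F a. finite F}"

definition closed_span_lp :: "real \<Rightarrow> (nat \<Rightarrow> nat \<Rightarrow> 'a::real_normed_field) \<Rightarrow> (nat \<Rightarrow> 'a) set" where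
  "closed_span_lp p x = {y \<in> lp_space p. \<forall>\<epsilon>>0. \<exists>z\<in>lin_span_seq x. lp_norm p (\<lambda>j. y j - z j) < \<epsilon>}"

text \<open>\<open>x\<close> is a basic sequence in \<open>\<ell>_p\<close>: a basis of its closed linear span
  \<open>X\<close>, i.e. the span is dense in \<open>X\<close> (automatic), there are biorthogonal
  continuous linear functionals \<open>x\<^sup>*_k\<close> on \<open>X\<close> with \<open>sup \<parallel>x\<^sup>*_k\<parallel> < \<infinity>\<close>, and
  \<open>inf \<parallel>x_n\<parallel> > 0\<close>.\<close>
definition basic_seq_lp :: "real \<Rightarrow> (nat \<Rightarrow> nat \<Rightarrow> 'a::real_normed_field) \<Rightarrow> bool" where
  "basic_seq_lp p x \<longleftrightarrow>
     (\<forall>n. x n \<in> lp_space p) \<and>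
     (\<exists>\<delta>>0. \<forall>n. lp_norm p (x n) \<ge> \<delta>) \<and>
     (\<exists>xs :: nat \<Rightarrow> (nat \<Rightarrow> 'a) \<Rightarrow> 'a. \<exists>K.
        (\<forall>k. \<forall>y\<in>closed_span_lp p x. \<forall>z\<in>closed_span_lp p x.
              xs k (\<lambda>j. y j + z j) = xs k y + xs k z) \<and>
        (\<forall>k. \<forall>y\<in>closed_span_lp p x. \<forall>c. xs k (\<lambda>j. c * y j) = c * xs k y) \<and>
        (\<forall>k. \<forall>y\<in>closed_span_lp p x. norm (xs k y) \<le> K * lp_norm p y) \<and>
        (\<forall>k n. xs k (x n) = (if k = n then 1 else 0)))"

text \<open>Suppression unconditional for constant coefficients.\<close>
definition SUCC_lp :: "real \<Rightarrow> (nat \<Rightarrow> nat \<Rightarrow> 'a::real_normed_field) \<Rightarrow> bool" where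
  "SUCC_lp p x \<longleftrightarrow>
     (\<exists>C\<ge>1. \<forall>A B \<epsilon>. finite B \<longrightarrow> A \<subseteq> B \<longrightarrow> (\<forall>n\<in>B. norm (\<epsilon> n) = 1) \<longrightarrow>
        lp_norm p (\<lambda>j. \<Sum>n\<in>A. \<epsilon> n * x n j) \<le> C * lp_norm p (\<lambda>j. \<Sum>n\<in>B. \<epsilon> n * x n j))"

end

theory Submission
  imports Defs "HOL-Computational_Algebra.Fundamental_Theorem_Algebra"
begin

text \<open>By Khintchine's inequality, for each coordinate \<open>j\<close> the quantity
  \<open>(\<Sum>\<^sub>n\<^sub>\<in>\<^sub>A |x\<^sub>n(j)|\<^sup>2)\<^bsup>p/2\<^esup>\<close> is comparable, up to absolute constants, to the average over
  all \<open>2\<^bsup>|A|\<^esup>\<close> sign patterns of \<open>|\<Sum>\<^sub>n\<^sub>\<in>\<^sub>A \<plusminus>x\<^sub>n(j)|\<^sup>p\<close>; summing over \<open>j\<close>, the \<open>p\<close>-th power of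
  the square function is comparable to the average of \<open>\<parallel>\<Sum>\<^sub>n\<^sub>\<in>\<^sub>A \<plusminus>x\<^sub>n\<parallel>\<^sub>p\<^sup>p\<close>. For a SUCC sequence
  every signed sum is comparable to the unsigned one: flipping the signs on \<open>D \<subseteq> A\<close> turns one
  into the difference of its parts over \<open>A - D\<close> and \<open>D\<close>, each bounded by \<open>C\<close> times the other,
  and \<open>\<parallel>\<cdot>\<parallel>\<^sub>p\<^sup>p\<close> is subadditive for \<open>p \<le> 1\<close>.

  Khintchine's inequality needs the parallelogram law in the scalar field. A real normed field
  is \<open>\<real>\<close> or \<open>\<complex>\<close> (Gelfand--Mazur); what is used is the elementary core of this: every
  element is a root of a real monic quadratic \<open>z\<^sup>2 - b z + c\<close> with \<open>b\<^sup>2 \<le> 4 c\<close>, because a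
  positive minimum of \<open>|z\<^sup>2 - b z + c|\<close> over such quadratics could be pushed to arbitrarily
  large \<open>c\<close>.\<close>


section \<open>The parallelogram law in real normed fields\<close>

definition poly_real :: "real poly \<Rightarrow> 'a::{real_algebra_1,comm_ring_1} \<Rightarrow> 'a" where
  "poly_real p z = poly (map_poly of_real p) z"

lemma poly_real_0 [simp]: "poly_real 0 z = 0"
  by (simp add: poly_real_def)

lemma poly_real_pCons [simp]: "poly_real (pCons a p) z = of_real a + z * poly_real p z"
  by (simp add: poly_real_def map_poly_pCons)

lemma poly_real_add: "poly_real (p + q) z = poly_real p z + poly_real q z"
proof (induction p arbitrary: q)
  case (pCons a p)
  then show ?case
    by (cases q rule: pCons_cases) (simp add: algebra_simps)
qed simp

lemma poly_real_smult: "poly_real (smult c p) z = of_real c * poly_real p z"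
  by (induction p) (simp_all add: algebra_simps)

lemma poly_real_mult: "poly_real (p * q) z = poly_real p z * poly_real q z"
  by (induction p) (simp_all add: poly_real_add poly_real_smult algebra_simps)

lemma poly_real_power: "poly_real (p ^ n) z = poly_real p z ^ n"
  by (induction n) (simp_all add: poly_real_mult one_pCons)

lemma poly_real_of_real: "poly_real p (of_real x) = of_real (poly p x)"
  by (induction p) simp_all

lemma degree_le_1_poly_eq:
  assumes "degree (r::'a::zero poly) \<le> 1"
  shows "r = [:coeff r 0, coeff r 1:]"
proof (rule poly_eqI)
  fix n
  show "coeff r n = coeff [:coeff r 0, coeff r 1:] n"
    using assms by (cases n; cases "n - 1") (auto simp: coeff_eq_0)
qed

lemma real_poly_quadratic_factor:
  fixes h :: "real poly"
  assumes no_roots: "\<forall>x. poly h x \<noteq> 0" and "degree h \<noteq> 0"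
  obtains s b c where "b\<^sup>2 \<le> 4 * c" and "h = s * [:c, -b, 1:]"
proof -
  let ?hc = "map_poly complex_of_real h"
  have "degree ?hc \<noteq> 0"
    using assms(2) by (simp add: degree_map_poly)
  then obtain \<alpha> :: complex where root: "poly_real h \<alpha> = 0"
    using fundamental_theorem_of_algebra_alt[of ?hc] unfolding poly_real_def
    by (metis degree_pCons_0)
  have "Im \<alpha> \<noteq> 0"
  proof
    assume "Im \<alpha> = 0"
    then have "\<alpha> = of_real (Re \<alpha>)"
      by (simp add: complex_eq_iff)
    then show False
      using root no_roots by (metis of_real_eq_0_iff poly_real_of_real)
  qed
  define q where "q = [:(cmod \<alpha>)\<^sup>2, -(2 * Re \<alpha>), 1:]"
  have "poly_real q \<alpha> = 0"
    using cmod_power2[of \<alpha>] by (simp add: q_def complex_eq_iff power2_eq_square algebra_simps)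
  define r where "r = h mod q"
  have "degree r \<le> 1"
    using degree_mod_less[of q h] by (auto simp: r_def q_def)
  then have r: "r = [:coeff r 0, coeff r 1:]"
    by (rule degree_le_1_poly_eq)
  have "h = (h div q) * q + r"
    by (simp add: r_def)
  then have "poly_real r \<alpha> = 0"
    using root \<open>poly_real q \<alpha> = 0\<close> by (metis add_0 mult_zero_right poly_real_add poly_real_mult)
  then have "of_real (coeff r 0) + \<alpha> * of_real (coeff r 1) = 0"
    by (subst (asm) r) simp
  with \<open>Im \<alpha> \<noteq> 0\<close> have "r = 0"
    by (subst r) (auto simp: complex_eq_iff)
  moreover have "(2 * Re \<alpha>)\<^sup>2 \<le> 4 * (cmod \<alpha>)\<^sup>2"
    by (simp add: cmod_power2 power_mult_distrib)
  moreover have "h = (h div q) * q"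
    using \<open>r = 0\<close> \<open>h = (h div q) * q + r\<close> by simp
  ultimately show ?thesis
    using that[of "2 * Re \<alpha>" "(cmod \<alpha>)\<^sup>2" "h div q"] unfolding q_def by blast
qed

lemma norm_poly_real_ge_if_no_real_roots:
  fixes z :: "'a::real_normed_field"
  assumes quadratic_ge: "\<And>b c. b\<^sup>2 \<le> 4 * c \<Longrightarrow> m \<le> norm (poly_real [:c, -b, 1:] z)"
    and "0 \<le> m" and "\<forall>x. poly h x \<noteq> 0"
  shows "\<bar>lead_coeff h\<bar> * m ^ (degree h div 2) \<le> norm (poly_real h z)"
  using assms(3)
proof (induction "degree h" arbitrary: h rule: less_induct)
  case less
  show ?case
  proof (cases "degree h = 0")
    case True
    then obtain c where "h = [:c:]"
      by (metis degree_eq_zeroE)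
    then show ?thesis by simp
  next
    case False
    with less.prems obtain s b c where bc: "b\<^sup>2 \<le> 4 * c" and h: "h = s * [:c, -b, 1:]"
      by (rule real_poly_quadratic_factor)
    have "s \<noteq> 0"
      using False h by auto
    then have deg: "degree h = degree s + 2"
      using degree_mult_eq[of s "[:c, -b, 1:]"] by (simp add: h)
    have lc: "lead_coeff h = lead_coeff s"
      using lead_coeff_mult[of s "[:c, -b, 1:]"] by (simp add: h)
    have "\<forall>x. poly s x \<noteq> 0"
      using less.prems h by (metis mult_zero_left poly_mult)
    then have IH: "\<bar>lead_coeff s\<bar> * m ^ (degree s div 2) \<le> norm (poly_real s z)"
      using deg by (intro less.hyps) auto
    have "\<bar>lead_coeff h\<bar> * m ^ (degree h div 2) = \<bar>lead_coeff s\<bar> * m ^ (degree s div 2) * m"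
      using deg lc by simp
    also have "\<dots> \<le> norm (poly_real s z) * norm (poly_real [:c, -b, 1:] z)"
      using IH quadratic_ge[OF bc] \<open>0 \<le> m\<close> by (intro mult_mono) auto
    also have "\<dots> = norm (poly_real h z)"
      by (simp only: h poly_real_mult norm_mult)
    finally show ?thesis .
  qed
qed

lemma norm_monic_quadratic_ge:
  fixes z :: "'a::real_normed_field"
  shows "c - \<bar>b\<bar> * norm z - (norm z)\<^sup>2 \<le> norm (poly_real [:c, -b, 1:] z)"
proof -
  have "of_real c = poly_real [:c, -b, 1:] z + of_real b * z - z * z"
    by (simp add: algebra_simps)
  then have "norm (of_real c :: 'a) \<le> norm (poly_real [:c, -b, 1:] z + of_real b * z) + norm (z * z)"
    by (metis norm_triangle_ineq4)
  also have "\<dots> \<le> norm (poly_real [:c, -b, 1:] z) + norm (of_real b * z) + norm (z * z)"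
    by (simp add: norm_triangle_ineq)
  finally show ?thesis
    by (simp add: norm_mult power2_eq_square)
qed

lemma norm_monic_quadratic_gt_if_large:
  fixes z :: "'a::real_normed_field"
  assumes "b\<^sup>2 \<le> 4 * c" and large: "16 * (norm z + 1)\<^sup>2 < c"
  shows "(norm z)\<^sup>2 < norm (poly_real [:c, -b, 1:] z)"
proof -
  define n where "n = norm z"
  define s where "s = sqrt c"
  have "0 \<le> n"
    by (simp add: n_def)
  have "0 \<le> c"
    using large zero_le_power2[of "norm z + 1"] by linarith
  then have c: "c = s * s" and "0 \<le> s"
    by (simp_all add: s_def)
  have "\<bar>b\<bar> \<le> 2 * s"
    using real_sqrt_le_mono[OF assms(1)] by (simp add: s_def real_sqrt_mult)
  have "(4 * (n + 1))\<^sup>2 < c"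
    using large unfolding n_def power_mult_distrib by simp
  then have "4 * (n + 1) < s"
    by (simp add: s_def real_less_rsqrt)
  then have "(4 * n + 4) * (2 * n + 4) < s * (s - 2 * n)"
    using \<open>0 \<le> n\<close> by (intro mult_strict_mono) auto
  moreover have "\<bar>b\<bar> * n \<le> 2 * s * n"
    using \<open>\<bar>b\<bar> \<le> 2 * s\<close> \<open>0 \<le> n\<close> by (rule mult_right_mono)
  moreover have "(4 * n + 4) * (2 * n + 4) = 8 * (n * n) + 24 * n + 16"
    and "s * (s - 2 * n) = c - 2 * s * n"
    by (simp_all add: c algebra_simps)
  moreover have "0 \<le> n * n"
    by simp
  ultimately have "n\<^sup>2 < c - \<bar>b\<bar> * n - n\<^sup>2"
    using \<open>0 \<le> n\<close> unfolding power2_eq_square by linarith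
  with norm_monic_quadratic_ge[of c b z] show ?thesis
    by (simp add: n_def)
qed

lemma monic_quadratic_min_exists:
  fixes z :: "'a::real_normed_field"
  obtains b\<^sub>0 c\<^sub>0 where "b\<^sub>0\<^sup>2 \<le> 4 * c\<^sub>0"
    and "\<And>b c. b\<^sup>2 \<le> 4 * c \<Longrightarrow> norm (poly_real [:c\<^sub>0, -b\<^sub>0, 1:] z) \<le> norm (poly_real [:c, -b, 1:] z)"
proof -
  define R where "R = 16 * (norm z + 1)\<^sup>2"
  define g where "g = (\<lambda>bc :: real \<times> real. norm (of_real (snd bc) - of_real (fst bc) * z + z * z))"
  define K where "K = {bc :: real \<times> real. (fst bc)\<^sup>2 \<le> 4 * snd bc \<and> snd bc \<le> R}"
  have g: "g (b, c) = norm (poly_real [:c, -b, 1:] z)" for b c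
    by (simp add: g_def algebra_simps)
  have "K \<subseteq> cbox (- (1 + 4 * R), 0) (1 + 4 * R, R)"
  proof
    fix bc assume "bc \<in> K"
    then obtain b c where bc: "bc = (b, c)" "b\<^sup>2 \<le> 4 * c" "c \<le> R"
      by (cases bc) (auto simp: K_def)
    have "0 \<le> (\<bar>b\<bar> - 1)\<^sup>2"
      by simp
    then have "\<bar>b\<bar> \<le> 1 + b\<^sup>2"
      by (simp add: power2_diff)
    moreover have "0 \<le> c"
      using bc(2) zero_le_power2[of b] by linarith
    ultimately show "bc \<in> cbox (- (1 + 4 * R), 0) (1 + 4 * R, R)"
      using bc by auto
  qed
  then have "bounded K"
    by (rule bounded_subset[OF bounded_cbox])
  moreover have "closed K"
    unfolding K_def by (intro closed_Collect_conj closed_Collect_le continuous_intros)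
  ultimately have "compact K"
    by (simp add: compact_eq_bounded_closed)
  moreover have "(0, 0) \<in> K"
    by (simp add: K_def R_def)
  moreover have "continuous_on K g"
    unfolding g_def by (intro continuous_intros)
  ultimately obtain bc\<^sub>0 where "bc\<^sub>0 \<in> K" and min_K: "\<forall>bc\<in>K. g bc\<^sub>0 \<le> g bc"
    using continuous_attains_inf[of K g] by blast
  obtain b\<^sub>0 c\<^sub>0 where bc\<^sub>0: "bc\<^sub>0 = (b\<^sub>0, c\<^sub>0)"
    by (cases bc\<^sub>0)
  have "g bc\<^sub>0 \<le> g (b, c)" if "b\<^sup>2 \<le> 4 * c" for b c
  proof (cases "c \<le> R")
    case True
    then show ?thesis
      using min_K that by (auto simp: K_def)
  next
    case False
    have "g bc\<^sub>0 \<le> g (0, 0)"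
      using min_K \<open>(0, 0) \<in> K\<close> by blast
    also have "\<dots> = (norm z)\<^sup>2"
      by (simp add: g_def norm_mult power2_eq_square)
    also have "\<dots> < g (b, c)"
      using norm_monic_quadratic_gt_if_large[OF that, of z] False by (simp only: g R_def not_le)
    finally show ?thesis by simp
  qed
  with \<open>bc\<^sub>0 \<in> K\<close> show ?thesis
    using that[of b\<^sub>0 c\<^sub>0] by (auto simp: bc\<^sub>0 K_def g)
qed

lemma monic_quadratic_nonneg:
  fixes b c x :: real
  assumes "b\<^sup>2 \<le> 4 * c"
  shows "0 \<le> poly [:c, -b, 1:] x"
proof -
  have "poly [:c, -b, 1:] x = (x - b / 2)\<^sup>2 + (c - b\<^sup>2 / 4)"
    by (simp add: power2_eq_square algebra_simps)
  then show ?thesis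
    using assms zero_le_power2[of "x - b / 2"] by linarith
qed

lemma monic_quadratic_odd_power_factor:
  fixes b c \<epsilon> :: real
  assumes disc: "b\<^sup>2 \<le> 4 * c" and "0 < \<epsilon>" and "odd n"
  obtains H where "[:c + \<epsilon>, -b, 1:] * H = [:c, -b, 1:] ^ n + [:\<epsilon> ^ n:]"
    and "lead_coeff H = 1" and "degree H = 2 * n - 2" and "\<forall>x. poly H x \<noteq> 0"
proof -
  define f where "f = [:c, -b, 1:]"
  define P where "P = [:c + \<epsilon>, -b, 1:]"
  define G where "G = f ^ n + [:\<epsilon> ^ n:]"
  define H where "H = (\<Sum>i<n. [:-\<epsilon>:] ^ (n - Suc i) * f ^ i)"
  have "n \<ge> 1"
    using \<open>odd n\<close> by (simp add: odd_pos Suc_leI)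
  have "f - [:-\<epsilon>:] = P"
    by (simp add: f_def P_def)
  then have "P * H = f ^ n - [:-\<epsilon>:] ^ n"
    unfolding H_def by (simp only: power_diff_sumr2)
  also have "[:-\<epsilon>:] ^ n = - [:\<epsilon> ^ n:]"
    using \<open>odd n\<close> by (simp add: poly_const_pow)
  finally have PH: "P * H = G"
    by (simp only: G_def diff_minus_eq_add)
  have deg_fn: "degree (f ^ n) = 2 * n"
    by (simp add: f_def degree_power_eq)
  have lc_fn: "lead_coeff (f ^ n) = 1"
    by (simp only: lead_coeff_power) (simp add: f_def)
  moreover have "degree [:\<epsilon> ^ n:] < 2 * n" and "coeff [:\<epsilon> ^ n:] (2 * n) = 0"
    using \<open>n \<ge> 1\<close> by (simp_all add: coeff_eq_0)
  ultimately have deg_G: "degree G = 2 * n" and lc_G: "lead_coeff G = 1"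
    using deg_fn degree_add_eq_left[of "[:\<epsilon> ^ n:]" "f ^ n"] by (simp_all add: G_def)
  then have "G \<noteq> 0" and "P \<noteq> 0"
    by (auto simp: P_def)
  then have "H \<noteq> 0"
    using PH by auto
  have "degree P = 2" and "lead_coeff P = 1"
    by (simp_all add: P_def)
  then have "degree H = 2 * n - 2" and "lead_coeff H = 1"
    using degree_mult_eq[OF \<open>P \<noteq> 0\<close> \<open>H \<noteq> 0\<close>] lead_coeff_mult[of P H] PH deg_G lc_G
    by simp_all
  moreover have "poly H x \<noteq> 0" for x
  proof -
    have "poly P x * poly H x = poly f x ^ n + \<epsilon> ^ n"
      using arg_cong[OF PH, of "\<lambda>q. poly q x"] by (simp add: G_def)
    moreover have "0 \<le> poly f x ^ n"
      using monic_quadratic_nonneg[OF disc] by (simp add: f_def)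
    ultimately show ?thesis
      using \<open>0 < \<epsilon>\<close> by (metis add_nonneg_pos mult_zero_right order_less_irrefl zero_less_power)
  qed
  ultimately show ?thesis
    using that PH by (simp add: P_def G_def f_def)
qed

text \<open>If \<open>m > 0\<close> is the minimum of \<open>|z\<^sup>2 - b z + c|\<close> over \<open>b\<^sup>2 \<le> 4 c\<close>, attained at
  \<open>f = [:c, -b\<^sub>0, 1:]\<close>, then for odd \<open>n\<close> the factorisation
  \<open>(f + \<epsilon>) H = f\<^sup>n + \<epsilon>\<^sup>n\<close> gives \<open>|f(z) + \<epsilon>| m\<^sup>n\<^sup>-\<^sup>1 \<le> m\<^sup>n + \<epsilon>\<^sup>n\<close>, so the minimum is also
  attained at \<open>f + \<epsilon>\<close> for \<open>\<epsilon> = m/2\<close>.\<close>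
lemma monic_quadratic_min_shift:
  fixes z :: "'a::real_normed_field"
  assumes min: "\<And>b c. b\<^sup>2 \<le> 4 * c \<Longrightarrow> m \<le> norm (poly_real [:c, -b, 1:] z)"
    and "0 < m" and disc: "b\<^sub>0\<^sup>2 \<le> 4 * c" and attained: "norm (poly_real [:c, -b\<^sub>0, 1:] z) = m"
  shows "norm (poly_real [:c + m / 2, -b\<^sub>0, 1:] z) = m"
proof -
  define P where "P = [:c + m / 2, -b\<^sub>0, 1:]"
  have bound: "norm (poly_real P z) \<le> m + m * (1 / 2) ^ n" if "odd n" for n
  proof -
    obtain H where PH: "P * H = [:c, -b\<^sub>0, 1:] ^ n + [:(m / 2) ^ n:]"
      and lc: "lead_coeff H = 1" and deg: "degree H = 2 * n - 2" and roots: "\<forall>x. poly H x \<noteq> 0"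
      using monic_quadratic_odd_power_factor[OF disc _ \<open>odd n\<close>, of "m / 2"] \<open>0 < m\<close>
      unfolding P_def by auto
    have "degree H div 2 = n - 1"
      unfolding deg by presburger
    then have "m ^ (n - 1) \<le> norm (poly_real H z)"
      using norm_poly_real_ge_if_no_real_roots[OF min less_imp_le[OF \<open>0 < m\<close>] roots] lc
      by simp
    then have "norm (poly_real P z) * m ^ (n - 1) \<le> norm (poly_real (P * H) z)"
      by (simp add: poly_real_mult norm_mult mult_left_mono)
    also have "\<dots> \<le> m ^ n + (m / 2) ^ n"
      using norm_triangle_ineq[of "poly_real [:c, -b\<^sub>0, 1:] z ^ n" "of_real ((m / 2) ^ n)"]
        attained \<open>0 < m\<close>
      by (simp only: PH poly_real_add poly_real_power) (simp add: norm_power)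
    also have "\<dots> = (m + m * (1 / 2) ^ n) * m ^ (n - 1)"
      using \<open>odd n\<close> by (cases n) (simp_all add: field_simps)
    finally show ?thesis
      using \<open>0 < m\<close> by simp
  qed
  have "(\<lambda>k. (1 / 2 :: real) ^ (2 * k + 1)) \<longlonglongrightarrow> 0"
    using LIMSEQ_subseq_LIMSEQ[OF LIMSEQ_power_zero[of "1 / 2 :: real"], of "\<lambda>k. 2 * k + 1"]
    by (simp add: strict_mono_def o_def)
  then have "(\<lambda>k. m + m * (1 / 2) ^ (2 * k + 1)) \<longlonglongrightarrow> m + m * 0"
    by (intro tendsto_add tendsto_mult tendsto_const)
  moreover have "\<forall>k. norm (poly_real P z) \<le> m + m * (1 / 2) ^ (2 * k + 1)"
    by (intro allI bound) simp
  ultimately have "norm (poly_real P z) \<le> m + m * 0"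
    using LIMSEQ_le_const by blast
  moreover have "m \<le> norm (poly_real P z)"
    using min[of b\<^sub>0 "c + m / 2"] disc \<open>0 < m\<close> by (simp add: P_def)
  ultimately show ?thesis
    by (simp add: P_def)
qed

lemma monic_quadratic_root_exists:
  fixes z :: "'a::real_normed_field"
  obtains b c where "b\<^sup>2 \<le> 4 * c" and "poly_real [:c, -b, 1:] z = 0"
proof -
  obtain b\<^sub>0 c\<^sub>0 where disc: "b\<^sub>0\<^sup>2 \<le> 4 * c\<^sub>0"
    and min: "\<And>b c. b\<^sup>2 \<le> 4 * c \<Longrightarrow> norm (poly_real [:c\<^sub>0, -b\<^sub>0, 1:] z) \<le> norm (poly_real [:c, -b, 1:] z)"
    using monic_quadratic_min_exists[where z = z] by blast
  define m where "m = norm (poly_real [:c\<^sub>0, -b\<^sub>0, 1:] z)"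
  have min_m: "\<And>b c. b\<^sup>2 \<le> 4 * c \<Longrightarrow> m \<le> norm (poly_real [:c, -b, 1:] z)"
    unfolding m_def by (rule min)
  show ?thesis
  proof (cases "m = 0")
    case True
    then show ?thesis
      using that disc by (simp add: m_def)
  next
    case False
    then have "0 < m"
      by (simp add: m_def)
    have shifted: "b\<^sub>0\<^sup>2 \<le> 4 * (c\<^sub>0 + k * (m / 2)) \<and>
        norm (poly_real [:c\<^sub>0 + k * (m / 2), -b\<^sub>0, 1:] z) = m" for k :: nat
    proof (induction k)
      case 0
      show ?case
        using disc m_def by simp
    next
      case (Suc k)
      have eq: "c\<^sub>0 + Suc k * (m / 2) = (c\<^sub>0 + k * (m / 2)) + m / 2"
        by (simp add: algebra_simps)
      have "4 * (c\<^sub>0 + k * (m / 2) + m / 2) = 4 * (c\<^sub>0 + k * (m / 2)) + 2 * m"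
        by (simp add: algebra_simps)
      then have "b\<^sub>0\<^sup>2 \<le> 4 * (c\<^sub>0 + k * (m / 2) + m / 2)"
        using conjunct1[OF Suc.IH] \<open>0 < m\<close> by linarith
      moreover have "norm (poly_real [:(c\<^sub>0 + k * (m / 2)) + m / 2, -b\<^sub>0, 1:] z) = m"
        by (rule monic_quadratic_min_shift[OF min_m \<open>0 < m\<close> conjunct1[OF Suc.IH] conjunct2[OF Suc.IH]])
      ultimately show ?case
        unfolding eq by (intro conjI)
    qed
    obtain k :: nat where "m + \<bar>b\<^sub>0\<bar> * norm z + (norm z)\<^sup>2 - c\<^sub>0 < k * (m / 2)"
      using ex_less_of_nat_mult[of "m / 2" "m + \<bar>b\<^sub>0\<bar> * norm z + (norm z)\<^sup>2 - c\<^sub>0"] \<open>0 < m\<close>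
      by auto
    with norm_monic_quadratic_ge[of "c\<^sub>0 + k * (m / 2)" b\<^sub>0 z] conjunct2[OF shifted[of k]]
    have False
      by linarith
    then show ?thesis ..
  qed
qed

lemma mult_imag_unit_combination:
  fixes w :: "'a::real_field"
  assumes "w * w = -1"
  shows "(of_real x + of_real y * w) * (of_real p + of_real q * w) =
    of_real (x * p - y * q) + of_real (x * q + y * p) * w"
proof -
  have "(of_real x + of_real y * w) * (of_real p + of_real q * w) =
      of_real (x * p) + of_real (x * q + y * p) * w + of_real (y * q) * (w * w)"
    by (simp add: algebra_simps)
  then show ?thesis
    using assms by (simp add: algebra_simps)
qed

text \<open>All powers of \<open>x + y w\<close> again have coordinates on the unit circle, so they are
  bounded, which forces \<open>norm (x + y w) \<le> 1\<close>.\<close>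
lemma norm_imag_unit_combination_le_1:
  fixes w :: "'a::real_normed_field"
  assumes w: "w * w = -1" and "x\<^sup>2 + y\<^sup>2 = 1"
  shows "norm (of_real x + of_real y * w) \<le> 1"
proof (rule ccontr)
  define u where "u = of_real x + of_real y * w"
  assume "\<not> norm (of_real x + of_real y * w) \<le> 1"
  then have "1 < norm u"
    by (simp add: u_def)
  have "(norm w)\<^sup>2 = 1"
    using arg_cong[OF w, of norm] by (simp add: norm_mult power2_eq_square)
  then have "norm w = 1"
    using norm_ge_zero[of w] by (auto simp: power2_eq_1_iff)
  have powers: "\<exists>p q. p\<^sup>2 + q\<^sup>2 = 1 \<and> u ^ n = of_real p + of_real q * w" for n
  proof (induction n)
    case 0
    then show ?case
      by (intro exI[of _ 1] exI[of _ 0]) simp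
  next
    case (Suc n)
    then obtain p q where pq: "p\<^sup>2 + q\<^sup>2 = 1" "u ^ n = of_real p + of_real q * w"
      by blast
    have "u ^ Suc n = u * (of_real p + of_real q * w)"
      by (simp only: power_Suc pq(2))
    also have "\<dots> = of_real (x * p - y * q) + of_real (x * q + y * p) * w"
      unfolding u_def by (rule mult_imag_unit_combination[OF w])
    finally have "u ^ Suc n = of_real (x * p - y * q) + of_real (x * q + y * p) * w" .
    moreover have "(x * p - y * q)\<^sup>2 + (x * q + y * p)\<^sup>2 = (x\<^sup>2 + y\<^sup>2) * (p\<^sup>2 + q\<^sup>2)"
      by (simp add: power2_eq_square algebra_simps)
    ultimately show ?case
      using \<open>x\<^sup>2 + y\<^sup>2 = 1\<close> pq(1) by (intro exI[of _ "x * p - y * q"] exI[of _ "x * q + y * p"]) simp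
  qed
  have "norm u ^ n \<le> 2" for n
  proof -
    obtain p q where pq: "p\<^sup>2 + q\<^sup>2 = 1" "u ^ n = of_real p + of_real q * w"
      using powers by blast
    then have "p\<^sup>2 \<le> 1" and "q\<^sup>2 \<le> 1"
      using zero_le_power2[of p] zero_le_power2[of q] by linarith+
    then have "\<bar>p\<bar> \<le> 1" and "\<bar>q\<bar> \<le> 1"
      by (simp_all add: abs_square_le_1)
    moreover have "norm (u ^ n) \<le> \<bar>p\<bar> + \<bar>q\<bar>"
      using norm_triangle_ineq[of "of_real p :: 'a" "of_real q * w"] \<open>norm w = 1\<close>
      by (simp add: pq(2) norm_mult)
    ultimately show ?thesis
      by (simp add: norm_power)
  qed
  moreover obtain n where "2 < norm u ^ n"
    using real_arch_pow[OF \<open>1 < norm u\<close>] by blast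
  ultimately show False
    by (meson not_le)
qed

lemma norm_imag_unit_combination:
  fixes w :: "'a::real_normed_field"
  assumes w: "w * w = -1"
  shows "norm (of_real x + of_real y * w) = sqrt (x\<^sup>2 + y\<^sup>2)"
proof (cases "x\<^sup>2 + y\<^sup>2 = 0")
  case True
  then show ?thesis
    by (simp add: add_nonneg_eq_0_iff)
next
  case False
  define r where "r = sqrt (x\<^sup>2 + y\<^sup>2)"
  have "0 < r"
    using False by (simp add: r_def sum_power2_gt_zero_iff)
  have unit: "(x / r)\<^sup>2 + (y / r)\<^sup>2 = 1" and unit': "(x / r)\<^sup>2 + (- (y / r))\<^sup>2 = 1"
    using False by (simp_all add: r_def power_divide add_divide_distrib[symmetric])
  define u where "u = of_real (x / r) + of_real (y / r) * (w :: 'a)"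
  define v where "v = of_real (x / r) + of_real (- (y / r)) * (w :: 'a)"
  have "u * v = 1"
    using unit unfolding u_def v_def mult_imag_unit_combination[OF w]
    by (simp add: power2_eq_square)
  then have "norm u * norm v = 1"
    by (metis norm_mult norm_one)
  moreover have "norm u \<le> 1" and "norm v \<le> 1"
    unfolding u_def v_def using norm_imag_unit_combination_le_1[OF w] unit unit' by blast+
  ultimately have "norm u = 1"
    by (metis mult_left_le norm_ge_zero order_antisym)
  moreover have "of_real x + of_real y * w = of_real r * u"
    using \<open>0 < r\<close> by (simp add: u_def algebra_simps of_real_def)
  ultimately show ?thesis
    using \<open>0 < r\<close> by (simp add: norm_mult r_def)
qed

text \<open>Writing \<open>z = a + s w\<close> with \<open>w\<^sup>2 = -1\<close> (from a real quadratic that \<open>z\<close> satisfies),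
  norms are Euclidean in the coordinates \<open>(a, s)\<close>.\<close>
lemma parallelogram_law_one:
  fixes z :: "'a::real_normed_field"
  shows "(norm (z + 1))\<^sup>2 + (norm (z - 1))\<^sup>2 = 2 * (norm z)\<^sup>2 + 2"
proof -
  obtain b c where disc: "b\<^sup>2 \<le> 4 * c" and root: "poly_real [:c, -b, 1:] z = 0"
    by (rule monic_quadratic_root_exists)
  define a where "a = b / 2"
  define d where "d = c - a\<^sup>2"
  have "0 \<le> d"
    using disc by (simp add: d_def a_def power_divide)
  have "z * z = of_real b * z - of_real c"
    using root by (simp add: algebra_simps)
  moreover have "(z - of_real a) * (z - of_real a) = z * z - of_real (2 * a) * z + of_real (a\<^sup>2)"
    by (simp add: algebra_simps power2_eq_square)
  ultimately have sq: "(z - of_real a) * (z - of_real a) = - of_real d"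
    by (simp add: a_def d_def algebra_simps)
  show ?thesis
  proof (cases "d = 0")
    case True
    then have "z = of_real a"
      using sq by simp
    then have "z + 1 = of_real (a + 1)" and "z - 1 = of_real (a - 1)"
      by simp_all
    with \<open>z = of_real a\<close> show ?thesis
      by (simp only: norm_of_real power2_abs) (simp add: power2_eq_square algebra_simps)
  next
    case False
    define s where "s = sqrt d"
    have "0 < s" and ss: "of_real s * of_real s = (of_real d :: 'a)"
      using False \<open>0 \<le> d\<close> by (simp_all add: s_def flip: of_real_mult)
    define w where "w = (z - of_real a) / of_real s"
    have w: "w * w = -1"
      using sq ss False by (simp add: w_def)
    have z: "z = of_real a + of_real s * w"
      using \<open>0 < s\<close> by (simp add: w_def)
    have "z + 1 = of_real (a + 1) + of_real s * w" and "z - 1 = of_real (a - 1) + of_real s * w"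
      by (simp_all add: z algebra_simps)
    then have "(norm (z + 1))\<^sup>2 = (a + 1)\<^sup>2 + s\<^sup>2" and "(norm (z - 1))\<^sup>2 = (a - 1)\<^sup>2 + s\<^sup>2"
      and "(norm z)\<^sup>2 = a\<^sup>2 + s\<^sup>2"
      by (simp_all only: z norm_imag_unit_combination[OF w]) simp_all
    then show ?thesis
      by (simp add: power2_eq_square algebra_simps)
  qed
qed

lemma parallelogram_law:
  fixes u v :: "'a::real_normed_field"
  shows "(norm (u + v))\<^sup>2 + (norm (u - v))\<^sup>2 = 2 * (norm u)\<^sup>2 + 2 * (norm v)\<^sup>2"
proof (cases "v = 0")
  case False
  define z where "z = u / v"
  have "u + v = (z + 1) * v" and "u - v = (z - 1) * v" and "u = z * v"
    using False by (simp_all add: z_def algebra_simps)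
  then have "norm (u + v) = norm (z + 1) * norm v" and "norm (u - v) = norm (z - 1) * norm v"
    and "norm u = norm z * norm v"
    by (simp_all only: norm_mult)
  then have "(norm (u + v))\<^sup>2 + (norm (u - v))\<^sup>2 =
      ((norm (z + 1))\<^sup>2 + (norm (z - 1))\<^sup>2) * (norm v)\<^sup>2"
    and "(norm u)\<^sup>2 = (norm z)\<^sup>2 * (norm v)\<^sup>2"
    by (simp_all add: algebra_simps)
  then show ?thesis
    unfolding parallelogram_law_one by (simp add: algebra_simps)
qed simp


section \<open>Khintchine's inequality over sign patterns\<close>

definition signed_sum :: "('i \<Rightarrow> 'a::ab_group_add) \<Rightarrow> 'i set \<Rightarrow> 'i set \<Rightarrow> 'a" where
  "signed_sum a A D = (\<Sum>n\<in>A. if n \<in> D then - a n else a n)"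

lemma signed_sum_insert:
  assumes "finite A" and "x \<notin> A" and "D \<subseteq> A"
  shows "signed_sum a (insert x A) D = signed_sum a A D + a x"
    and "signed_sum a (insert x A) (insert x D) = signed_sum a A D - a x"
proof -
  have "(\<Sum>n\<in>A. if n \<in> insert x D then - a n else a n) = signed_sum a A D"
    unfolding signed_sum_def using assms(2) by (intro sum.cong) auto
  then show "signed_sum a (insert x A) D = signed_sum a A D + a x"
    and "signed_sum a (insert x A) (insert x D) = signed_sum a A D - a x"
    using assms by (auto simp: signed_sum_def)
qed

lemma sum_Pow_insert_signed_sum:
  assumes A: "finite A" and x: "x \<notin> A"
  shows "(\<Sum>D\<in>Pow (insert x A). g (signed_sum a (insert x A) D)) =
    (\<Sum>D\<in>Pow A. g (signed_sum a A D + a x) + g (signed_sum a A D - a x))"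
proof -
  have "inj_on (insert x) (Pow A)"
    using x unfolding inj_on_def by (auto simp: insert_ident)
  moreover have "Pow A \<inter> insert x ` Pow A = {}"
    using x by auto
  ultimately have "(\<Sum>D\<in>Pow (insert x A). g (signed_sum a (insert x A) D)) =
      (\<Sum>D\<in>Pow A. g (signed_sum a (insert x A) D)) +
      (\<Sum>D\<in>Pow A. g (signed_sum a (insert x A) (insert x D)))"
    unfolding Pow_insert using A by (simp add: sum.union_disjoint sum.reindex)
  also have "\<dots> = (\<Sum>D\<in>Pow A. g (signed_sum a A D + a x)) + (\<Sum>D\<in>Pow A. g (signed_sum a A D - a x))"
    using A x by (auto intro!: sum.cong arg_cong2[where f = "(+)"] simp: signed_sum_insert)
  finally show ?thesis
    by (simp add: sum.distrib)
qed

lemma sum_Pow_norm_signed_sum_sq: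
  fixes a :: "'i \<Rightarrow> 'a::real_normed_field"
  assumes "finite A"
  shows "(\<Sum>D\<in>Pow A. (norm (signed_sum a A D))\<^sup>2) = 2 ^ card A * (\<Sum>n\<in>A. (norm (a n))\<^sup>2)"
  using assms
proof (induction A rule: finite_induct)
  case (insert x A)
  have "(\<Sum>D\<in>Pow (insert x A). (norm (signed_sum a (insert x A) D))\<^sup>2) =
      (\<Sum>D\<in>Pow A. (norm (signed_sum a A D + a x))\<^sup>2 + (norm (signed_sum a A D - a x))\<^sup>2)"
    by (rule sum_Pow_insert_signed_sum[OF insert(1,2)])
  also have "\<dots> = (\<Sum>D\<in>Pow A. 2 * (norm (signed_sum a A D))\<^sup>2 + 2 * (norm (a x))\<^sup>2)"
    by (simp only: parallelogram_law)
  also have "\<dots> = 2 * (\<Sum>D\<in>Pow A. (norm (signed_sum a A D))\<^sup>2) + 2 * 2 ^ card A * (norm (a x))\<^sup>2"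
    using insert(1) by (simp add: sum.distrib sum_distrib_left card_Pow)
  also have "\<dots> = 2 ^ card (insert x A) * (\<Sum>n\<in>insert x A. (norm (a n))\<^sup>2)"
    using insert by (simp add: algebra_simps)
  finally show ?case .
qed (simp add: signed_sum_def)

lemma norm_pow4_add_diff_le:
  fixes u v :: "'a::real_normed_field"
  shows "norm (u + v) ^ 4 + norm (u - v) ^ 4 \<le>
    2 * ((norm u)\<^sup>2)\<^sup>2 + 12 * (norm u)\<^sup>2 * (norm v)\<^sup>2 + 2 * ((norm v)\<^sup>2)\<^sup>2"
proof -
  define P Q where "P = (norm (u + v))\<^sup>2" and "Q = (norm (u - v))\<^sup>2"
  have "\<bar>(norm u)\<^sup>2 - (norm v)\<^sup>2\<bar> \<le> norm (u * u - v * v)"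
    using norm_triangle_ineq3[of "u * u" "v * v"] by (simp add: norm_mult power2_eq_square)
  also have "u * u - v * v = (u + v) * (u - v)"
    by (simp add: algebra_simps)
  finally have "((norm u)\<^sup>2 - (norm v)\<^sup>2)\<^sup>2 \<le> P * Q"
    unfolding P_def Q_def norm_mult
    by (metis abs_ge_zero power2_abs power_mono power_mult_distrib)
  moreover have "P + Q = 2 * (norm u)\<^sup>2 + 2 * (norm v)\<^sup>2"
    unfolding P_def Q_def by (rule parallelogram_law)
  moreover have "norm (u + v) ^ 4 + norm (u - v) ^ 4 = (P + Q)\<^sup>2 - 2 * (P * Q)"
    by (simp add: P_def Q_def power2_eq_square power4_eq_xxxx algebra_simps)
  ultimately show ?thesis
    by (simp add: power2_eq_square algebra_simps)
qed

lemma sum_Pow_norm_signed_sum_pow4_le: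
  fixes a :: "'i \<Rightarrow> 'a::real_normed_field"
  assumes "finite A"
  shows "(\<Sum>D\<in>Pow A. norm (signed_sum a A D) ^ 4) \<le> 3 * 2 ^ card A * (\<Sum>n\<in>A. (norm (a n))\<^sup>2)\<^sup>2"
  using assms
proof (induction A rule: finite_induct)
  case (insert x A)
  define \<sigma> \<alpha> N where "\<sigma> = (\<Sum>n\<in>A. (norm (a n))\<^sup>2)" and "\<alpha> = (norm (a x))\<^sup>2"
    and "N = (2::real) ^ card A"
  have "0 \<le> \<sigma>" and "0 \<le> \<alpha>" and "0 \<le> N"
    by (simp_all add: \<sigma>_def \<alpha>_def N_def sum_nonneg)
  have "(\<Sum>D\<in>Pow (insert x A). norm (signed_sum a (insert x A) D) ^ 4) =
      (\<Sum>D\<in>Pow A. norm (signed_sum a A D + a x) ^ 4 + norm (signed_sum a A D - a x) ^ 4)"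
    by (rule sum_Pow_insert_signed_sum[OF insert(1,2)])
  also have "\<dots> \<le> (\<Sum>D\<in>Pow A. 2 * ((norm (signed_sum a A D))\<^sup>2)\<^sup>2 +
      12 * (norm (signed_sum a A D))\<^sup>2 * \<alpha> + 2 * \<alpha>\<^sup>2)"
    unfolding \<alpha>_def by (intro sum_mono norm_pow4_add_diff_le)
  also have "\<dots> = 2 * (\<Sum>D\<in>Pow A. norm (signed_sum a A D) ^ 4) +
      12 * \<alpha> * (\<Sum>D\<in>Pow A. (norm (signed_sum a A D))\<^sup>2) + 2 * N * \<alpha>\<^sup>2"
    using insert(1)
    by (simp add: sum.distrib sum_distrib_left sum_distrib_right card_Pow N_def algebra_simps
        flip: power_mult)
  also have "\<dots> \<le> 2 * (3 * N * \<sigma>\<^sup>2) + 12 * \<alpha> * (N * \<sigma>) + 2 * N * \<alpha>\<^sup>2"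
    using insert(3) sum_Pow_norm_signed_sum_sq[OF insert(1), of a] by (simp add: N_def \<sigma>_def)
  also have "\<dots> \<le> 3 * (2 * N) * (\<sigma> + \<alpha>)\<^sup>2"
    using \<open>0 \<le> \<alpha>\<close> \<open>0 \<le> N\<close> by (simp add: power2_eq_square algebra_simps)
  also have "\<dots> = 3 * 2 ^ card (insert x A) * (\<Sum>n\<in>insert x A. (norm (a n))\<^sup>2)\<^sup>2"
    using insert by (simp add: N_def \<sigma>_def \<alpha>_def algebra_simps)
  finally show ?case .
qed (simp add: signed_sum_def)

lemma powr_le_powr_add_sq_mult:
  fixes X t p :: real
  assumes "0 \<le> X" and "0 < t" and "0 < p" and "p < 2"
  shows "X powr p \<le> t powr p + X\<^sup>2 * t powr (p - 2)"
proof (cases "X \<le> t")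
  case True
  then have "X powr p \<le> t powr p"
    using assms by (intro powr_mono2) auto
  then show ?thesis
    by (simp add: add_increasing2)
next
  case False
  then have "X powr p = X\<^sup>2 * X powr (p - 2)"
    using assms by (simp flip: powr_add powr_numeral)
  also have "\<dots> \<le> X\<^sup>2 * t powr (p - 2)"
    using False assms by (intro mult_left_mono powr_mono2') auto
  finally show ?thesis
    by (simp add: add_increasing)
qed

lemma sq_le_powr_mult_add_pow4_div:
  fixes X t p :: real
  assumes "0 \<le> X" and "0 < t" and "0 < p" and "p < 2"
  shows "X\<^sup>2 \<le> t powr (2 - p) * X powr p + X ^ 4 / t\<^sup>2"
proof (cases "X \<le> t")
  case True
  have "X\<^sup>2 = X powr (2 - p) * X powr p"
    using assms by (simp flip: powr_add powr_numeral)
  also have "\<dots> \<le> t powr (2 - p) * X powr p"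
    using True assms by (intro mult_right_mono powr_mono2) auto
  finally show ?thesis
    using assms by (simp add: add_increasing2)
next
  case False
  then have "1 \<le> X\<^sup>2 / t\<^sup>2"
    using assms by (simp add: power_mono)
  then have "X\<^sup>2 * 1 \<le> X\<^sup>2 * (X\<^sup>2 / t\<^sup>2)"
    by (rule mult_left_mono) simp
  also have "\<dots> = X ^ 4 / t\<^sup>2"
    by (simp add: power4_eq_xxxx power2_eq_square)
  finally show ?thesis
    by (simp add: add_increasing)
qed

lemma signed_sum_eq_0_if_sum_sq_eq_0:
  fixes a :: "'i \<Rightarrow> 'a::real_normed_vector"
  assumes "finite A" and "(\<Sum>n\<in>A. (norm (a n))\<^sup>2) = 0"
  shows "signed_sum a A D = 0"
proof -
  have "\<forall>n\<in>A. a n = 0"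
    using assms sum_nonneg_eq_0_iff[of A "\<lambda>n. (norm (a n))\<^sup>2"] by simp
  then show ?thesis
    unfolding signed_sum_def by (intro sum.neutral) auto
qed

lemma khintchine_upper:
  fixes a :: "'i \<Rightarrow> 'a::real_normed_field"
  assumes A: "finite A" and "0 < p" and "p < 2"
  shows "(\<Sum>D\<in>Pow A. norm (signed_sum a A D) powr p) \<le> 2 * 2 ^ card A * (\<Sum>n\<in>A. (norm (a n))\<^sup>2) powr (p / 2)"
proof -
  define \<sigma> where "\<sigma> = (\<Sum>n\<in>A. (norm (a n))\<^sup>2)"
  define N where "N = (2::real) ^ card A"
  show ?thesis
  proof (cases "\<sigma> = 0")
    case True
    then show ?thesis
      using signed_sum_eq_0_if_sum_sq_eq_0[OF A True[unfolded \<sigma>_def]] by (simp add: \<sigma>_def)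
  next
    case False
    then have "0 < \<sigma>"
      by (simp add: \<sigma>_def order_less_le sum_nonneg)
    define t where "t = sqrt \<sigma>"
    have "0 < t"
      using \<open>0 < \<sigma>\<close> by (simp add: t_def)
    have t_powr: "t powr q = \<sigma> powr (q / 2)" for q
      using \<open>0 < \<sigma>\<close> by (simp add: t_def powr_half_sqrt[symmetric] powr_powr)
    have "(\<Sum>D\<in>Pow A. norm (signed_sum a A D) powr p) \<le>
        (\<Sum>D\<in>Pow A. t powr p + (norm (signed_sum a A D))\<^sup>2 * t powr (p - 2))"
      using \<open>0 < t\<close> assms by (intro sum_mono powr_le_powr_add_sq_mult) auto
    also have "\<dots> = N * t powr p + (\<Sum>D\<in>Pow A. (norm (signed_sum a A D))\<^sup>2) * t powr (p - 2)"
      using A by (simp add: sum.distrib sum_distrib_right card_Pow N_def)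
    also have "\<dots> = N * \<sigma> powr (p / 2) + N * (\<sigma> * \<sigma> powr ((p - 2) / 2))"
      using sum_Pow_norm_signed_sum_sq[OF A, of a] by (simp add: t_powr N_def \<sigma>_def)
    also have "\<sigma> * \<sigma> powr ((p - 2) / 2) = \<sigma> powr (p / 2)"
      using \<open>0 < \<sigma>\<close> by (simp add: powr_mult_base add_divide_distrib[symmetric] diff_divide_distrib)
    finally show ?thesis
      by (simp add: N_def \<sigma>_def)
  qed
qed

text \<open>With \<open>t\<^sup>2 = 6 \<sigma>\<close>, averaging the pointwise bound \<open>X\<^sup>2 \<le> t\<^bsup>2-p\<^esup> X\<^sup>p + X\<^sup>4 / t\<^sup>2\<close> over all
  sign patterns and inserting the second and fourth moments leaves half of the second moment
  controlled by the \<open>p\<close>-th one.\<close>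
lemma khintchine_lower:
  fixes a :: "'i \<Rightarrow> 'a::real_normed_field"
  assumes A: "finite A" and "0 < p" and "p < 2"
  shows "2 ^ card A * (\<Sum>n\<in>A. (norm (a n))\<^sup>2) powr (p / 2) \<le> 12 * (\<Sum>D\<in>Pow A. norm (signed_sum a A D) powr p)"
proof -
  define \<sigma> where "\<sigma> = (\<Sum>n\<in>A. (norm (a n))\<^sup>2)"
  define N where "N = (2::real) ^ card A"
  define S where "S = (\<Sum>D\<in>Pow A. norm (signed_sum a A D) powr p)"
  have "0 \<le> S"
    by (simp add: S_def sum_nonneg)
  show ?thesis
  proof (cases "\<sigma> = 0")
    case True
    then show ?thesis
      using \<open>0 \<le> S\<close> by (simp add: \<sigma>_def S_def)
  next
    case False
    then have "0 < \<sigma>"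
      by (simp add: \<sigma>_def order_less_le sum_nonneg)
    define t where "t = sqrt (6 * \<sigma>)"
    have "0 < t" and t_sq: "t\<^sup>2 = 6 * \<sigma>"
      using \<open>0 < \<sigma>\<close> by (simp_all add: t_def)
    have "N * \<sigma> = (\<Sum>D\<in>Pow A. (norm (signed_sum a A D))\<^sup>2)"
      using sum_Pow_norm_signed_sum_sq[OF A, of a] by (simp add: N_def \<sigma>_def)
    also have "\<dots> \<le> (\<Sum>D\<in>Pow A. t powr (2 - p) * norm (signed_sum a A D) powr p +
        norm (signed_sum a A D) ^ 4 / t\<^sup>2)"
      using \<open>0 < t\<close> assms by (intro sum_mono sq_le_powr_mult_add_pow4_div) auto
    also have "\<dots> = t powr (2 - p) * S + (\<Sum>D\<in>Pow A. norm (signed_sum a A D) ^ 4) / t\<^sup>2"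
      by (simp add: sum.distrib sum_distrib_left sum_divide_distrib S_def)
    also have "(\<Sum>D\<in>Pow A. norm (signed_sum a A D) ^ 4) / t\<^sup>2 \<le> 3 * N * \<sigma>\<^sup>2 / t\<^sup>2"
      using sum_Pow_norm_signed_sum_pow4_le[OF A, of a] by (intro divide_right_mono) (auto simp: N_def \<sigma>_def)
    also have "3 * N * \<sigma>\<^sup>2 / t\<^sup>2 = N * \<sigma> / 2"
      using \<open>0 < \<sigma>\<close> t_sq by (simp add: power2_eq_square)
    finally have "N * \<sigma> \<le> 2 * t powr (2 - p) * S"
      by simp
    also have "t powr (2 - p) = 6 powr ((2 - p) / 2) * \<sigma> powr ((2 - p) / 2)"
      using \<open>0 < \<sigma>\<close> by (simp add: t_def powr_half_sqrt[symmetric] powr_powr powr_mult)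
    also have "6 powr ((2 - p) / 2) \<le> (6::real) powr 1"
      using assms by (intro powr_mono) auto
    then have "2 * (6 powr ((2 - p) / 2) * \<sigma> powr ((2 - p) / 2)) * S \<le> 2 * (6 * \<sigma> powr ((2 - p) / 2)) * S"
      using \<open>0 \<le> S\<close> by (intro mult_right_mono mult_left_mono) auto
    finally have "(N * \<sigma> powr (p / 2)) * \<sigma> powr ((2 - p) / 2) \<le> (12 * S) * \<sigma> powr ((2 - p) / 2)"
      using \<open>0 < \<sigma>\<close> by (simp add: mult_ac add_divide_distrib[symmetric] flip: powr_add)
    then show ?thesis
      using \<open>0 < \<sigma>\<close> by (simp add: N_def \<sigma>_def S_def)
  qed
qed


section \<open>Subadditivity of \<open>\<parallel>\<cdot>\<parallel>\<^sub>p\<^sup>p\<close> for \<open>p \<le> 1\<close>\<close>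

lemma powr_add_le_add_powr:
  fixes u v p :: real
  assumes "0 \<le> u" and "0 \<le> v" and "0 < p" and "p \<le> 1"
  shows "(u + v) powr p \<le> u powr p + v powr p"
proof (cases "u + v = 0")
  case False
  define s where "s = u + v"
  have "0 < s"
    using False assms by (simp add: s_def)
  have "r / s \<le> (r / s) powr p" if "0 \<le> r" "r \<le> s" for r
    using powr_mono'[of p 1 "r / s"] that \<open>0 < s\<close> assms by simp
  then have "u / s + v / s \<le> (u / s) powr p + (v / s) powr p"
    using assms by (intro add_mono) (auto simp: s_def)
  moreover have "u / s + v / s = 1"
    using \<open>0 < s\<close> by (simp add: s_def add_divide_distrib[symmetric])
  ultimately have "s powr p \<le> u powr p + v powr p"
    using \<open>0 < s\<close> assms by (simp add: powr_divide add_divide_distrib[symmetric] le_divide_eq)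
  then show ?thesis
    by (simp add: s_def)
qed simp

lemma powr_sum_le_sum_powr:
  fixes f :: "'i \<Rightarrow> real"
  assumes "finite A" and "\<And>n. n \<in> A \<Longrightarrow> 0 \<le> f n" and "0 < p" and "p \<le> 1"
  shows "(\<Sum>n\<in>A. f n) powr p \<le> (\<Sum>n\<in>A. f n powr p)"
  using assms(1,2)
proof (induction A rule: finite_induct)
  case (insert y A)
  then have "(\<Sum>n\<in>insert y A. f n) powr p \<le> f y powr p + (\<Sum>n\<in>A. f n) powr p"
    using assms(3,4) by (simp add: powr_add_le_add_powr sum_nonneg)
  also have "\<dots> \<le> f y powr p + (\<Sum>n\<in>A. f n powr p)"
    using insert by simp
  finally show ?case
    using insert by simp
qed simp

definition lp_sum :: "real \<Rightarrow> (nat \<Rightarrow> 'a::real_normed_vector) \<Rightarrow> real" where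
  "lp_sum p f = (\<Sum>j. norm (f j) powr p)"

lemma lp_norm_eq_lp_sum_powr: "lp_norm p f = lp_sum p f powr (1 / p)"
  by (simp add: lp_norm_def lp_sum_def)

lemma lp_sum_nonneg: "summable (\<lambda>j. norm (f j) powr p) \<Longrightarrow> 0 \<le> lp_sum p f"
  by (simp add: lp_sum_def suminf_nonneg)

lemma lp_sum_uminus [simp]: "lp_sum p (\<lambda>j. - f j) = lp_sum p f"
  by (simp add: lp_sum_def)

lemma lp_sum_add_le:
  assumes f: "summable (\<lambda>j. norm (f j) powr p)" and g: "summable (\<lambda>j. norm (g j) powr p)"
    and "0 < p" and "p \<le> 1"
  shows "lp_sum p (\<lambda>j. f j + g j) \<le> lp_sum p f + lp_sum p g"
proof -
  have pointwise: "norm (f j + g j) powr p \<le> norm (f j) powr p + norm (g j) powr p" for j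
  proof -
    have "norm (f j + g j) powr p \<le> (norm (f j) + norm (g j)) powr p"
      using assms(3) by (intro powr_mono2 norm_triangle_ineq) auto
    also have "\<dots> \<le> norm (f j) powr p + norm (g j) powr p"
      using assms(3,4) by (intro powr_add_le_add_powr) auto
    finally show ?thesis .
  qed
  have fg: "summable (\<lambda>j. norm (f j) powr p + norm (g j) powr p)"
    by (intro summable_add f g)
  moreover have "summable (\<lambda>j. norm (f j + g j) powr p)"
    by (rule summable_comparison_test'[OF fg, where N = 0]) (simp add: pointwise)
  ultimately have "(\<Sum>j. norm (f j + g j) powr p) \<le> (\<Sum>j. norm (f j) powr p + norm (g j) powr p)"
    by (intro suminf_le pointwise)
  also have "\<dots> = lp_sum p f + lp_sum p g"
    unfolding lp_sum_def by (rule suminf_add[OF f g, symmetric])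
  finally show ?thesis
    by (simp add: lp_sum_def)
qed

lemma summable_norm_sum_powr:
  fixes x :: "'i \<Rightarrow> nat \<Rightarrow> 'a::real_normed_field"
  assumes "finite A" and "\<And>n. n \<in> A \<Longrightarrow> summable (\<lambda>j. norm (x n j) powr p)"
    and "\<And>n. n \<in> A \<Longrightarrow> norm (\<epsilon> n) \<le> 1" and "0 < p" and "p \<le> 1"
  shows "summable (\<lambda>j. norm (\<Sum>n\<in>A. \<epsilon> n * x n j) powr p)"
proof (rule summable_comparison_test'[where N = 0])
  show "summable (\<lambda>j. \<Sum>n\<in>A. norm (x n j) powr p)"
    using assms(2) by (rule summable_sum)
next
  fix j
  have "norm (\<Sum>n\<in>A. \<epsilon> n * x n j) \<le> (\<Sum>n\<in>A. norm (\<epsilon> n * x n j))"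
    by (rule norm_sum)
  also have "\<dots> \<le> (\<Sum>n\<in>A. norm (x n j))"
    using assms(3) by (intro sum_mono) (simp add: norm_mult mult_left_le_one_le)
  finally have "norm (\<Sum>n\<in>A. \<epsilon> n * x n j) powr p \<le> (\<Sum>n\<in>A. norm (x n j)) powr p"
    using assms(4) by (intro powr_mono2) auto
  also have "\<dots> \<le> (\<Sum>n\<in>A. norm (x n j) powr p)"
    using assms by (intro powr_sum_le_sum_powr) auto
  finally show "norm (norm (\<Sum>n\<in>A. \<epsilon> n * x n j) powr p) \<le> (\<Sum>n\<in>A. norm (x n j) powr p)"
    by simp
qed

lemma powr_inverse_le_mult:
  fixes a b k p :: real
  assumes "0 \<le> a" and "0 \<le> b" and "0 \<le> k" and "0 < p" and "a \<le> k * b"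
  shows "a powr (1 / p) \<le> k powr (1 / p) * b powr (1 / p)"
  using powr_mono2[of "1 / p" a "k * b"] assms by (simp add: powr_mult)


section \<open>SUCC sequences and the square function\<close>

locale succ_lp =
  fixes p :: real and x :: "nat \<Rightarrow> nat \<Rightarrow> 'a::real_normed_field" and C :: real
  assumes p_pos: "0 < p" and p_le_1: "p \<le> 1"
    and summable_x: "\<And>n. summable (\<lambda>j. norm (x n j) powr p)"
    and C_ge_1: "1 \<le> C"
    and succ: "\<And>A B \<epsilon>. finite B \<Longrightarrow> A \<subseteq> B \<Longrightarrow> \<forall>n\<in>B. norm (\<epsilon> n) = 1 \<Longrightarrow>
      lp_norm p (\<lambda>j. \<Sum>n\<in>A. \<epsilon> n * x n j) \<le> C * lp_norm p (\<lambda>j. \<Sum>n\<in>B. \<epsilon> n * x n j)"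
begin

definition signed_comb :: "nat set \<Rightarrow> nat set \<Rightarrow> nat \<Rightarrow> 'a" where
  "signed_comb A D = (\<lambda>j. signed_sum (\<lambda>n. x n j) A D)"

definition square_function :: "nat set \<Rightarrow> real" where
  "square_function A = (\<Sum>j. (\<Sum>n\<in>A. (norm (x n j))\<^sup>2) powr (p / 2))"

lemma summable_comb:
  assumes "finite A" and "\<And>n. n \<in> A \<Longrightarrow> norm (\<epsilon> n) \<le> 1"
  shows "summable (\<lambda>j. norm (\<Sum>n\<in>A. \<epsilon> n * x n j) powr p)"
  using summable_norm_sum_powr[OF assms(1) summable_x assms(2) p_pos p_le_1] .

lemma signed_comb_eq: "signed_comb A D = (\<lambda>j. \<Sum>n\<in>A. (if n \<in> D then -1 else 1) * x n j)"
  unfolding signed_comb_def signed_sum_def by (intro ext sum.cong) auto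

lemma summable_signed_comb:
  "finite A \<Longrightarrow> summable (\<lambda>j. norm (signed_comb A D j) powr p)"
  unfolding signed_comb_eq by (rule summable_comb) auto

lemma lp_sum_succ:
  assumes "finite B" and "A \<subseteq> B" and "\<forall>n\<in>B. norm (\<epsilon> n) = 1"
  shows "lp_sum p (\<lambda>j. \<Sum>n\<in>A. \<epsilon> n * x n j) \<le> C powr p * lp_sum p (\<lambda>j. \<Sum>n\<in>B. \<epsilon> n * x n j)"
proof -
  have "finite A"
    using assms finite_subset by blast
  then have nonneg: "0 \<le> lp_sum p (\<lambda>j. \<Sum>n\<in>A. \<epsilon> n * x n j)" "0 \<le> lp_sum p (\<lambda>j. \<Sum>n\<in>B. \<epsilon> n * x n j)"
    using assms by (auto intro!: lp_sum_nonneg summable_comb)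
  have "(lp_sum p (\<lambda>j. \<Sum>n\<in>A. \<epsilon> n * x n j) powr (1 / p)) powr p \<le>
      (C * lp_sum p (\<lambda>j. \<Sum>n\<in>B. \<epsilon> n * x n j) powr (1 / p)) powr p"
    using succ[OF assms] p_pos by (intro powr_mono2) (auto simp: lp_norm_eq_lp_sum_powr)
  then show ?thesis
    using nonneg C_ge_1 p_pos by (simp add: powr_powr powr_mult)
qed

text \<open>Flipping the signs on \<open>D\<close> changes \<open>\<Sum>\<^sub>A \<epsilon>\<^sub>n x\<^sub>n\<close> into the difference of its parts over
  \<open>A - D\<close> and \<open>D\<close>, each of which SUCC bounds by the whole sum.\<close>
lemma lp_sum_sign_flip_le:
  assumes A: "finite A" and D: "D \<subseteq> A" and \<epsilon>: "\<forall>n\<in>A. norm (\<epsilon> n) = 1"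
  shows "lp_sum p (\<lambda>j. \<Sum>n\<in>A. (if n \<in> D then - \<epsilon> n else \<epsilon> n) * x n j) \<le>
    2 * C powr p * lp_sum p (\<lambda>j. \<Sum>n\<in>A. \<epsilon> n * x n j)"
proof -
  have "finite D"
    using A D finite_subset by blast
  have split: "(\<Sum>n\<in>A. (if n \<in> D then - \<epsilon> n else \<epsilon> n) * x n j) =
      (\<Sum>n\<in>A - D. \<epsilon> n * x n j) + - (\<Sum>n\<in>D. \<epsilon> n * x n j)" for j
    using sum.subset_diff[OF D A, of "\<lambda>n. (if n \<in> D then - \<epsilon> n else \<epsilon> n) * x n j"]
    by (simp add: sum_negf)
  have "lp_sum p (\<lambda>j. \<Sum>n\<in>A. (if n \<in> D then - \<epsilon> n else \<epsilon> n) * x n j) \<le>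
      lp_sum p (\<lambda>j. \<Sum>n\<in>A - D. \<epsilon> n * x n j) + lp_sum p (\<lambda>j. - (\<Sum>n\<in>D. \<epsilon> n * x n j))"
    unfolding split using \<open>finite D\<close> A D \<epsilon> p_pos p_le_1
    by (intro lp_sum_add_le) (auto intro!: summable_comb simp: norm_minus_cancel)
  also have "\<dots> \<le> C powr p * lp_sum p (\<lambda>j. \<Sum>n\<in>A. \<epsilon> n * x n j) + C powr p * lp_sum p (\<lambda>j. \<Sum>n\<in>A. \<epsilon> n * x n j)"
    unfolding lp_sum_uminus using A D \<epsilon> by (intro add_mono lp_sum_succ) auto
  finally show ?thesis
    by simp
qed

lemma lp_sum_signed_comb_le:
  assumes "finite A" and "D \<subseteq> A"
  shows "lp_sum p (signed_comb A D) \<le> 2 * C powr p * lp_sum p (\<lambda>j. \<Sum>n\<in>A. x n j)"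
  using lp_sum_sign_flip_le[OF assms, of "\<lambda>_. 1"] by (simp add: signed_comb_eq)

lemma lp_sum_le_signed_comb:
  assumes "finite A" and "D \<subseteq> A"
  shows "lp_sum p (\<lambda>j. \<Sum>n\<in>A. x n j) \<le> 2 * C powr p * lp_sum p (signed_comb A D)"
proof -
  let ?\<delta> = "\<lambda>n. if n \<in> D then -1 else 1 :: 'a"
  have unflip: "(\<lambda>j. \<Sum>n\<in>A. (if n \<in> D then - ?\<delta> n else ?\<delta> n) * x n j) = (\<lambda>j. \<Sum>n\<in>A. x n j)"
    by (intro ext sum.cong) auto
  have "\<forall>n\<in>A. norm (?\<delta> n) = 1"
    by simp
  from lp_sum_sign_flip_le[OF assms this, unfolded unflip] show ?thesis
    unfolding signed_comb_eq .
qed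

lemma summable_sum_x: "finite A \<Longrightarrow> summable (\<lambda>j. norm (\<Sum>n\<in>A. x n j) powr p)"
  using summable_comb[of A "\<lambda>_. 1"] by simp

lemma summable_square_function:
  assumes "finite A"
  shows "summable (\<lambda>j. (\<Sum>n\<in>A. (norm (x n j))\<^sup>2) powr (p / 2))"
proof (rule summable_comparison_test'[where N = 0])
  show "summable (\<lambda>j. \<Sum>n\<in>A. norm (x n j) powr p)"
    by (intro summable_sum summable_x)
next
  fix j
  have "(\<Sum>n\<in>A. (norm (x n j))\<^sup>2) powr (p / 2) \<le> (\<Sum>n\<in>A. ((norm (x n j))\<^sup>2) powr (p / 2))"
    using assms p_pos p_le_1 by (intro powr_sum_le_sum_powr) auto
  also have "\<dots> = (\<Sum>n\<in>A. norm (x n j) powr p)"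
    by (simp add: powr_powr flip: powr_numeral)
  finally show "norm ((\<Sum>n\<in>A. (norm (x n j))\<^sup>2) powr (p / 2)) \<le> (\<Sum>n\<in>A. norm (x n j) powr p)"
    by simp
qed

lemma square_function_nonneg: "finite A \<Longrightarrow> 0 \<le> square_function A"
  unfolding square_function_def by (intro suminf_nonneg summable_square_function) auto

lemma summable_sum_Pow_signed_comb:
  "finite A \<Longrightarrow> summable (\<lambda>j. \<Sum>D\<in>Pow A. norm (signed_comb A D j) powr p)"
  by (intro summable_sum summable_signed_comb)

lemma suminf_sum_Pow_signed_comb:
  "finite A \<Longrightarrow> (\<Sum>j. \<Sum>D\<in>Pow A. norm (signed_comb A D j) powr p) = (\<Sum>D\<in>Pow A. lp_sum p (signed_comb A D))"
  unfolding lp_sum_def by (intro suminf_sum summable_signed_comb)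

lemma square_function_le:
  assumes A: "finite A"
  shows "square_function A \<le> 24 * C powr p * lp_sum p (\<lambda>j. \<Sum>n\<in>A. x n j)"
proof -
  define N where "N = (2::real) ^ card A"
  have "N * square_function A = (\<Sum>j. N * (\<Sum>n\<in>A. (norm (x n j))\<^sup>2) powr (p / 2))"
    unfolding square_function_def by (intro suminf_mult[symmetric] summable_square_function A)
  also have "\<dots> \<le> (\<Sum>j. 12 * (\<Sum>D\<in>Pow A. norm (signed_comb A D j) powr p))"
  proof (rule suminf_le)
    fix j
    show "N * (\<Sum>n\<in>A. (norm (x n j))\<^sup>2) powr (p / 2) \<le> 12 * (\<Sum>D\<in>Pow A. norm (signed_comb A D j) powr p)"
      using khintchine_lower[OF A p_pos, where a = "\<lambda>n. x n j"] p_le_1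
      by (simp add: N_def signed_comb_def)
  qed (intro summable_mult summable_square_function summable_sum_Pow_signed_comb A)+
  also have "\<dots> = 12 * (\<Sum>D\<in>Pow A. lp_sum p (signed_comb A D))"
    by (simp add: suminf_mult summable_sum_Pow_signed_comb suminf_sum_Pow_signed_comb A)
  also have "\<dots> \<le> 12 * (\<Sum>D\<in>Pow A. 2 * C powr p * lp_sum p (\<lambda>j. \<Sum>n\<in>A. x n j))"
    using A by (intro mult_left_mono sum_mono lp_sum_signed_comb_le) auto
  also have "\<dots> = N * (24 * C powr p * lp_sum p (\<lambda>j. \<Sum>n\<in>A. x n j))"
    using A by (simp add: N_def card_Pow)
  finally show ?thesis
    by (simp add: N_def)
qed

lemma lp_sum_le_square_function:
  assumes A: "finite A"
  shows "lp_sum p (\<lambda>j. \<Sum>n\<in>A. x n j) \<le> 4 * C powr p * square_function A"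
proof -
  define N where "N = (2::real) ^ card A"
  have "N * lp_sum p (\<lambda>j. \<Sum>n\<in>A. x n j) = (\<Sum>D\<in>Pow A. lp_sum p (\<lambda>j. \<Sum>n\<in>A. x n j))"
    using A by (simp add: N_def card_Pow)
  also have "\<dots> \<le> (\<Sum>D\<in>Pow A. 2 * C powr p * lp_sum p (signed_comb A D))"
    using A by (intro sum_mono lp_sum_le_signed_comb) auto
  also have "\<dots> = 2 * C powr p * (\<Sum>j. \<Sum>D\<in>Pow A. norm (signed_comb A D j) powr p)"
    by (simp add: suminf_sum_Pow_signed_comb A sum_distrib_left)
  also have "(\<Sum>j. \<Sum>D\<in>Pow A. norm (signed_comb A D j) powr p) \<le>
      (\<Sum>j. 2 * N * (\<Sum>n\<in>A. (norm (x n j))\<^sup>2) powr (p / 2))"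
  proof (rule suminf_le)
    fix j
    show "(\<Sum>D\<in>Pow A. norm (signed_comb A D j) powr p) \<le> 2 * N * (\<Sum>n\<in>A. (norm (x n j))\<^sup>2) powr (p / 2)"
      using khintchine_upper[OF A p_pos, where a = "\<lambda>n. x n j"] p_le_1
      by (simp add: N_def signed_comb_def)
  qed (intro summable_mult summable_square_function summable_sum_Pow_signed_comb A)+
  also have "(\<Sum>j. 2 * N * (\<Sum>n\<in>A. (norm (x n j))\<^sup>2) powr (p / 2)) = 2 * N * square_function A"
    unfolding square_function_def by (intro suminf_mult summable_square_function A)
  finally show ?thesis
    using C_ge_1 by (simp add: N_def mult_left_mono)
qed

lemma lp_norm_sum_ge:
  assumes "finite A"
  shows "1 / (24 powr (1 / p) * C) * square_function A powr (1 / p) \<le> lp_norm p (\<lambda>j. \<Sum>n\<in>A. x n j)"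
proof -
  have "square_function A powr (1 / p) \<le> (24 * C powr p) powr (1 / p) * lp_sum p (\<lambda>j. \<Sum>n\<in>A. x n j) powr (1 / p)"
    using square_function_le[OF assms] square_function_nonneg[OF assms]
      lp_sum_nonneg[OF summable_sum_x[OF assms]] p_pos
    by (intro powr_inverse_le_mult) auto
  also have "(24 * C powr p) powr (1 / p) = 24 powr (1 / p) * C"
    using C_ge_1 p_pos by (simp add: powr_mult powr_powr)
  finally show ?thesis
    using C_ge_1 by (simp add: lp_norm_eq_lp_sum_powr divide_le_eq mult.commute)
qed

lemma lp_norm_sum_le:
  assumes "finite A"
  shows "lp_norm p (\<lambda>j. \<Sum>n\<in>A. x n j) \<le> 4 powr (1 / p) * C * square_function A powr (1 / p)"
proof -
  have "lp_norm p (\<lambda>j. \<Sum>n\<in>A. x n j) \<le> (4 * C powr p) powr (1 / p) * square_function A powr (1 / p)"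
    using lp_sum_le_square_function[OF assms] square_function_nonneg[OF assms]
      lp_sum_nonneg[OF summable_sum_x[OF assms]] p_pos
    unfolding lp_norm_eq_lp_sum_powr by (intro powr_inverse_le_mult) auto
  also have "(4 * C powr p) powr (1 / p) = 4 powr (1 / p) * C"
    using C_ge_1 p_pos by (simp add: powr_mult powr_powr)
  finally show ?thesis .
qed

end

theorem lemma3p4:
  fixes p :: real and x :: "nat \<Rightarrow> nat \<Rightarrow> 'a::{real_normed_field,banach}"
  assumes "0 < p" and "p < 1"
    and "basic_seq_lp p x" and "SUCC_lp p x"
  shows "\<exists>c C. 0 < c \<and> c \<le> C \<and> (\<forall>A. finite A \<longrightarrow>
           c * (\<Sum>j. (\<Sum>n\<in>A. norm (x n j) ^ 2) powr (p / 2)) powr (1 / p)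
             \<le> lp_norm p (\<lambda>j. \<Sum>n\<in>A. x n j) \<and>
           lp_norm p (\<lambda>j. \<Sum>n\<in>A. x n j)
             \<le> C * (\<Sum>j. (\<Sum>n\<in>A. norm (x n j) ^ 2) powr (p / 2)) powr (1 / p))"
proof -
  have "\<And>n. summable (\<lambda>j. norm (x n j) powr p)"
    using assms(3) by (simp add: basic_seq_lp_def lp_space_def)
  moreover obtain C where "1 \<le> C" and "\<forall>A B \<epsilon>. finite B \<longrightarrow> A \<subseteq> B \<longrightarrow> (\<forall>n\<in>B. norm (\<epsilon> n) = 1) \<longrightarrow>
      lp_norm p (\<lambda>j. \<Sum>n\<in>A. \<epsilon> n * x n j) \<le> C * lp_norm p (\<lambda>j. \<Sum>n\<in>B. \<epsilon> n * x n j)"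
    using assms(4) unfolding SUCC_lp_def by blast
  ultimately interpret succ_lp p x C
    using assms(1,2) by unfold_locales auto
  have "1 * 1 \<le> 24 powr (1 / p) * C" and "1 * 1 \<le> 4 powr (1 / p) * C"
    using \<open>1 \<le> C\<close> assms(1) by (intro mult_mono ge_one_powr_ge_zero; simp)+
  then have "1 / (24 powr (1 / p) * C) \<le> 4 powr (1 / p) * C"
    by (simp add: order_trans[of _ 1])
  then show ?thesis
    using lp_norm_sum_ge lp_norm_sum_le \<open>1 \<le> C\<close> unfolding square_function_def
    by (intro exI[of _ "1 / (24 powr (1 / p) * C)"] exI[of _ "4 powr (1 / p) * C"]) auto
qed

end
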